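(* Let $\mathcal{X}$ and $\mathcal{Y}$ be directed spaces and let $f:\mathcal{X}\to\mathcal{Y}$ be a morphism of directed spaces admitting an inverse morphism of directed spaces $g:\mathcal{Y}\to\mathcal{X}$ (i.e. $f\circ g=\mathrm{Id}$, $g\circ f=\mathrm{Id}$). Then for every $n\geq 1$, the natural homology functors $\overrightarrow{H}_n(\mathcal{X}):F\overrightarrow{P}(\mathcal{X})\to\mathbf{Ab}$ and $\overrightarrow{H}_n(\mathcal{Y}):F\overrightarrow{P}(\mathcal{Y})\to\mathbf{Ab}$ are bisimulation equivalent.
   Context: A directed space $\mathcal{X}=(X,dX)$ is a topological space $X$ with a set $dX$ of continuous paths $[0,1]\to X$ (dipaths) containing all constant paths, closed under monotone reparametrization (precomposition with continuous monotone $\varphi:[0,1]\to[0,1]$ with $\varphi(0)=0,\varphi(1)=1$) and under concatenation $\star$. A morphism of directed spaces is a continuous map sending dipaths to dipaths. A trace is the class of a dipath modulo monotone reparametrization; concatenation of traces is induced by that of dipaths. The trace space $\overrightarrow{T}(\mathcal{X})(x,y)$ is the space of dipaths from $x$ to $y$ (compact-open topology) modulo reparametrization, with quotient topology. The trace category $\overrightarrow{P}(\mathcal{X})$ has objects the points of $X$, morphisms the traces, composition by concatenation. For a category $\mathcal{C}$, its factorization category $F\mathcal{C}$ has objects the morphisms of $\mathcal{C}$, and a morphism $f\to f'$ is a pair $(u,v)$ of morphisms with $u f v=f'$ (in concatenation order), composition $(u,v)(u',v')=(u'u,vv')$. For $n\geq1$, the natural homology $\overrightarrow{H}_n(\mathcal{X}):F\overrightarrow{P}(\mathcal{X})\to\mathbf{Ab}$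 sends a trace $f$ from $x$ to $y$ to $H_{n-1}(\overrightarrow{T}(\mathcal{X})(x,y))$ (singular homology) and a morphism $(u,v)$ to the map induced by $h\mapsto u\star h\star v$. Given small categories $A,B$ and functors $F:A\to\mathbf{Ab}$, $G:B\to\mathbf{Ab}$, a bisimulation is a set $R$ of triples $(a,\eta,b)$, $a$ an object of $A$, $b$ an object of $B$, $\eta:Fa\to Gb$ an isomorphism, such that (i) every object of $A$ and every object of $B$ occurs in some triple of $R$; (ii) for every $(a,\eta,b)\in R$ and morphism $i:a\to a'$ of $A$ there are $(a',\eta',b')\in R$ and $j:b\to b'$ in $B$ with $\eta'\circ Fi=Gj\circ\eta$, and symmetrically for every $j:b\to b'$ in $B$ there are $(a',\eta',b')\in R$ and $i:a\to a'$ with $\eta'\circ Fi=Gj\circ\eta$. $F$ and $G$ are bisimulation equivalent if such an $R$ exists. *)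

theory Defs
  imports "HOL-Analysis.Analysis" "HOL-Homology.Homology"
begin

text \<open>Convention: a path is a function real => 'a that is extensional
  outside [0,1] (value undefined there), continuous on [0,1].\<close>

definition unit_interval :: "real topology" where
  "unit_interval = subtopology euclideanreal {0..1}"

definition is_path_in :: "'a topology \<Rightarrow> (real \<Rightarrow> 'a) \<Rightarrow> bool" where
  "is_path_in X p \<longleftrightarrow> p \<in> extensional {0..1} \<and> continuous_map unit_interval X p"

definition const_path :: "'a \<Rightarrow> real \<Rightarrow> 'a" where
  "const_path x = restrict (\<lambda>_. x) {0..1}"

definition reparametrization :: "(real \<Rightarrow> real) \<Rightarrow> bool" where
  "reparametrization \<phi> \<longleftrightarrow> continuous_on {0..1} \<phi> \<and> mono_on {0..1} \<phi> \<and>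
     \<phi> ` {0..1} \<subseteq> {0..1} \<and> \<phi> 0 = 0 \<and> \<phi> 1 = 1"

definition reparam :: "(real \<Rightarrow> 'a) \<Rightarrow> (real \<Rightarrow> real) \<Rightarrow> real \<Rightarrow> 'a" where
  "reparam p \<phi> = restrict (p \<circ> \<phi>) {0..1}"

definition path_concat :: "(real \<Rightarrow> 'a) \<Rightarrow> (real \<Rightarrow> 'a) \<Rightarrow> real \<Rightarrow> 'a" where
  "path_concat p q = restrict (\<lambda>t. if t \<le> 1/2 then p (2 * t) else q (2 * t - 1)) {0..1}"

definition dspace :: "'a topology \<Rightarrow> (real \<Rightarrow> 'a) set \<Rightarrow> bool" where
  "dspace X dX \<longleftrightarrow>
     (\<forall>p\<in>dX. is_path_in X p) \<and>
     (\<forall>x\<in>topspace X. const_path x \<in> dX) \<and>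
     (\<forall>p\<in>dX. \<forall>\<phi>. reparametrization \<phi> \<longrightarrow> reparam p \<phi> \<in> dX) \<and>
     (\<forall>p\<in>dX. \<forall>q\<in>dX. p 1 = q 0 \<longrightarrow> path_concat p q \<in> dX)"

definition dmap :: "'a topology \<Rightarrow> (real \<Rightarrow> 'a) set \<Rightarrow> 'b topology \<Rightarrow> (real \<Rightarrow> 'b) set
     \<Rightarrow> ('a \<Rightarrow> 'b) \<Rightarrow> bool" where
  "dmap X dX Y dY f \<longleftrightarrow> continuous_map X Y f \<and>
     (\<forall>p\<in>dX. restrict (f \<circ> p) {0..1} \<in> dY)"

definition reparam_rel :: "(real \<Rightarrow> 'a) set \<Rightarrow> (real \<Rightarrow> 'a) \<Rightarrow> (real \<Rightarrow> 'a) \<Rightarrow> bool" where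
  "reparam_rel dX p q \<longleftrightarrow> p \<in> dX \<and> (\<exists>\<phi>. reparametrization \<phi> \<and> q = reparam p \<phi>)"

definition trace_of :: "(real \<Rightarrow> 'a) set \<Rightarrow> (real \<Rightarrow> 'a) \<Rightarrow> (real \<Rightarrow> 'a) set" where
  "trace_of dX p = {q \<in> dX. equivclp (reparam_rel dX) p q}"

definition traces :: "(real \<Rightarrow> 'a) set \<Rightarrow> (real \<Rightarrow> 'a) set set" where
  "traces dX = trace_of dX ` dX"

definition trace_src :: "(real \<Rightarrow> 'a) set \<Rightarrow> 'a" where
  "trace_src t = (SOME p. p \<in> t) 0"

definition trace_tgt :: "(real \<Rightarrow> 'a) set \<Rightarrow> 'a" where
  "trace_tgt t = (SOME p. p \<in> t) 1"

definition trace_concat :: "(real \<Rightarrow> 'a) set \<Rightarrow> (real \<Rightarrow> 'a) set \<Rightarrow> (real \<Rightarrow> 'a) set \<Rightarrow> (real \<Rightarrow> 'a) set" where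
  "trace_concat dX s t = trace_of dX (path_concat (SOME p. p \<in> s) (SOME q. q \<in> t))"

definition compact_open_topology :: "'a topology \<Rightarrow> (real \<Rightarrow> 'a) set \<Rightarrow> (real \<Rightarrow> 'a) topology" where
  "compact_open_topology X P = topology_generated_by
     {{p \<in> P. p ` K \<subseteq> U} | K U. compactin unit_interval K \<and> openin X U}"

definition quotient_topology :: "'a topology \<Rightarrow> ('a \<Rightarrow> 'b) \<Rightarrow> 'b topology" where
  "quotient_topology T q = topology (\<lambda>U. U \<subseteq> q ` topspace T \<and> openin T {x \<in> topspace T. q x \<in> U})"

definition dipaths_from_to :: "(real \<Rightarrow> 'a) set \<Rightarrow> 'a \<Rightarrow> 'a \<Rightarrow> (real \<Rightarrow> 'a) set" where
  "dipaths_from_to dX x y = {p \<in> dX. p 0 = x \<and> p 1 = y}"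

definition trace_space :: "'a topology \<Rightarrow> (real \<Rightarrow> 'a) set \<Rightarrow> 'a \<Rightarrow> 'a \<Rightarrow> (real \<Rightarrow> 'a) set topology" where
  "trace_space X dX x y =
     quotient_topology (compact_open_topology X (dipaths_from_to dX x y)) (trace_of dX)"

definition fact_hom :: "(real \<Rightarrow> 'a) set \<Rightarrow> (real \<Rightarrow> 'a) set \<Rightarrow> (real \<Rightarrow> 'a) set
     \<Rightarrow> ((real \<Rightarrow> 'a) set \<times> (real \<Rightarrow> 'a) set) set" where
  "fact_hom dX f f' = {(u, v). u \<in> traces dX \<and> v \<in> traces dX \<and>
       trace_tgt u = trace_src f \<and> trace_tgt f = trace_src v \<and>
       trace_concat dX (trace_concat dX u f) v = f'}"

definition nat_hom_obj :: "nat \<Rightarrow> 'a topology \<Rightarrow> (real \<Rightarrow> 'a) set \<Rightarrow> (real \<Rightarrow> 'a) set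
     \<Rightarrow> (real \<Rightarrow> 'a) set chain set monoid" where
  "nat_hom_obj n X dX f = homology_group (int n - 1) (trace_space X dX (trace_src f) (trace_tgt f))"

definition nat_hom_mor :: "nat \<Rightarrow> 'a topology \<Rightarrow> (real \<Rightarrow> 'a) set \<Rightarrow> (real \<Rightarrow> 'a) set
     \<Rightarrow> (real \<Rightarrow> 'a) set \<Rightarrow> (real \<Rightarrow> 'a) set \<times> (real \<Rightarrow> 'a) set
     \<Rightarrow> (real \<Rightarrow> 'a) set chain set \<Rightarrow> (real \<Rightarrow> 'a) set chain set" where
  "nat_hom_mor n X dX f f' uv =
     hom_induced (int n - 1)
       (trace_space X dX (trace_src f) (trace_tgt f)) {}
       (trace_space X dX (trace_src f') (trace_tgt f')) {}
       (\<lambda>h. trace_concat dX (trace_concat dX (fst uv) h) (snd uv))"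

text \<open>A functor F : A -> Ab is given by its object set A, hom-sets HomA,
  object part F and morphism part Fm (Fm a a' i : F a -> F a').\<close>

definition bisimulation ::
  "'a set \<Rightarrow> ('a \<Rightarrow> 'a \<Rightarrow> 'm set) \<Rightarrow> ('a \<Rightarrow> 'x monoid) \<Rightarrow> ('a \<Rightarrow> 'a \<Rightarrow> 'm \<Rightarrow> 'x \<Rightarrow> 'x) \<Rightarrow>
   'b set \<Rightarrow> ('b \<Rightarrow> 'b \<Rightarrow> 'n set) \<Rightarrow> ('b \<Rightarrow> 'y monoid) \<Rightarrow> ('b \<Rightarrow> 'b \<Rightarrow> 'n \<Rightarrow> 'y \<Rightarrow> 'y) \<Rightarrow>
   ('a \<times> ('x \<Rightarrow> 'y) \<times> 'b) set \<Rightarrow> bool" where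
  "bisimulation A HomA F Fm B HomB G Gm R \<longleftrightarrow>
     (\<forall>(a, \<eta>, b) \<in> R. a \<in> A \<and> b \<in> B \<and> \<eta> \<in> iso (F a) (G b)) \<and>
     (\<forall>a\<in>A. \<exists>\<eta> b. (a, \<eta>, b) \<in> R) \<and>
     (\<forall>b\<in>B. \<exists>a \<eta>. (a, \<eta>, b) \<in> R) \<and>
     (\<forall>(a, \<eta>, b) \<in> R. \<forall>a'\<in>A. \<forall>i\<in>HomA a a'.
        \<exists>\<eta>' b' j. (a', \<eta>', b') \<in> R \<and> j \<in> HomB b b' \<and>
          (\<forall>c\<in>carrier (F a). \<eta>' (Fm a a' i c) = Gm b b' j (\<eta> c))) \<and>
     (\<forall>(a, \<eta>, b) \<in> R. \<forall>b'\<in>B. \<forall>j\<in>HomB b b'.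
        \<exists>\<eta>' a' i. (a', \<eta>', b') \<in> R \<and> i \<in> HomA a a' \<and>
          (\<forall>c\<in>carrier (F a). \<eta>' (Fm a a' i c) = Gm b b' j (\<eta> c)))"

definition bisim_equivalent ::
  "'a set \<Rightarrow> ('a \<Rightarrow> 'a \<Rightarrow> 'm set) \<Rightarrow> ('a \<Rightarrow> 'x monoid) \<Rightarrow> ('a \<Rightarrow> 'a \<Rightarrow> 'm \<Rightarrow> 'x \<Rightarrow> 'x) \<Rightarrow>
   'b set \<Rightarrow> ('b \<Rightarrow> 'b \<Rightarrow> 'n set) \<Rightarrow> ('b \<Rightarrow> 'y monoid) \<Rightarrow> ('b \<Rightarrow> 'b \<Rightarrow> 'n \<Rightarrow> 'y \<Rightarrow> 'y) \<Rightarrow> bool" where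
  "bisim_equivalent A HomA F Fm B HomB G Gm \<longleftrightarrow>
     (\<exists>R. bisimulation A HomA F Fm B HomB G Gm R)"

end

theory Submission
  imports Defs
begin

(*
  A dihomeomorphism f with inverse g acts on dipaths by postcomposition, which commutes with
  reparametrization and concatenation. Hence f induces a bijection of traces compatible with
  concatenation, an isomorphism between the factorization categories, and homeomorphisms
  between corresponding trace spaces (continuity passes through the compact-open topology and
  the quotient by reparametrization). The maps these homeomorphisms induce in homology form a
  natural isomorphism between the two natural homology functors, and the graph
  {(a, H(f)_a, f a)} of a natural isomorphism is a bisimulation.
*)

section \<open>Reparametrization\<close>

definition concat_reparam :: "(real \<Rightarrow> real) \<Rightarrow> (real \<Rightarrow> real) \<Rightarrow> real \<Rightarrow> real" where
  "concat_reparam \<phi> \<psi> t = (if t \<le> 1/2 then \<phi> (2 * t) / 2 else (\<psi> (2 * t - 1) + 1) / 2)"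

lemma reparametrization_id: "reparametrization (\<lambda>t. t)"
  by (auto simp: reparametrization_def mono_on_def)

lemma reparametrization_range:
  "reparametrization \<phi> \<Longrightarrow> t \<in> {0..1} \<Longrightarrow> \<phi> t \<in> {0..1}"
  unfolding reparametrization_def by blast

lemma reparametrization_concat_reparam:
  assumes \<phi>: "reparametrization \<phi>" and \<psi>: "reparametrization \<psi>"
  shows "reparametrization (concat_reparam \<phi> \<psi>)"
proof -
  have \<phi>_cont: "continuous_on {0..1} \<phi>" and \<phi>_mono: "mono_on {0..1} \<phi>" and \<phi>_ends: "\<phi> 0 = 0" "\<phi> 1 = 1"
    and \<psi>_cont: "continuous_on {0..1} \<psi>" and \<psi>_mono: "mono_on {0..1} \<psi>" and \<psi>_ends: "\<psi> 0 = 0" "\<psi> 1 = 1"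
    using \<phi> \<psi> unfolding reparametrization_def by auto
  have "continuous_on {t \<in> {0..1}. t \<le> 1/2} (\<lambda>t. \<phi> (2 * t))"
    by (rule continuous_on_compose2[OF \<phi>_cont]) (auto intro!: continuous_intros)
  then have left: "continuous_on {t \<in> {0..1}. t \<le> 1/2} (\<lambda>t. \<phi> (2 * t) / 2)"
    by (intro continuous_intros) auto
  have "continuous_on {t \<in> {0..1}. 1/2 \<le> t} (\<lambda>t. \<psi> (2 * t - 1))"
    by (rule continuous_on_compose2[OF \<psi>_cont]) (auto intro!: continuous_intros)
  then have right: "continuous_on {t \<in> {0..1}. 1/2 \<le> t} (\<lambda>t. (\<psi> (2 * t - 1) + 1) / 2)"
    by (intro continuous_intros) auto
  have "continuous_on {0..1} (concat_reparam \<phi> \<psi>)"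
    unfolding concat_reparam_def[abs_def]
  proof (rule continuous_on_cases_le[OF left right])
    fix t :: real assume "t = 1/2"
    show "\<phi> (2 * t) / 2 = (\<psi> (2 * t - 1) + 1) / 2"
      unfolding \<open>t = 1/2\<close> by (simp add: \<phi>_ends \<psi>_ends)
  qed (intro continuous_intros)
  moreover have "mono_on {0..1} (concat_reparam \<phi> \<psi>)"
  proof (rule mono_onI)
    fix s t :: real assume "s \<in> {0..1}" "t \<in> {0..1}" "s \<le> t"
    moreover have "\<phi> (2 * s) \<le> 1" if "s \<in> {0..1/2}"
      using reparametrization_range[OF \<phi>, of "2 * s"] that by auto
    moreover have "0 \<le> \<psi> (2 * t - 1)" if "t \<in> {1/2..1}"
      using reparametrization_range[OF \<psi>, of "2 * t - 1"] that by auto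
    ultimately show "concat_reparam \<phi> \<psi> s \<le> concat_reparam \<phi> \<psi> t"
      using mono_onD[OF \<phi>_mono, of "2 * s" "2 * t"] mono_onD[OF \<psi>_mono, of "2 * s - 1" "2 * t - 1"]
      unfolding concat_reparam_def by (auto split: if_splits)
  qed
  moreover have "concat_reparam \<phi> \<psi> t \<in> {0..1}" if "t \<in> {0..1}" for t
    using that reparametrization_range[OF \<phi>, of "2 * t"] reparametrization_range[OF \<psi>, of "2 * t - 1"]
    by (auto simp: concat_reparam_def)
  moreover have "concat_reparam \<phi> \<psi> 0 = 0" "concat_reparam \<phi> \<psi> 1 = 1"
    by (simp_all add: concat_reparam_def \<phi>_ends \<psi>_ends)
  ultimately show ?thesis
    unfolding reparametrization_def by blast
qed

lemma reparam_id: "p \<in> extensional {0..1} \<Longrightarrow> reparam p (\<lambda>t. t) = p"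
  by (auto simp: reparam_def extensional_def)

lemma reparam_endpoints:
  "reparametrization \<phi> \<Longrightarrow> reparam p \<phi> 0 = p 0 \<and> reparam p \<phi> 1 = p 1"
  by (auto simp: reparam_def reparametrization_def)

lemma path_concat_endpoints [simp]: "path_concat p q 0 = p 0" "path_concat p q 1 = q 1"
  by (simp_all add: path_concat_def)

lemma path_concat_reparam:
  assumes \<phi>: "reparametrization \<phi>" and \<psi>: "reparametrization \<psi>" and "p 1 = q 0"
  shows "path_concat (reparam p \<phi>) (reparam q \<psi>) = reparam (path_concat p q) (concat_reparam \<phi> \<psi>)"
proof
  fix t :: real
  consider "t \<notin> {0..1}" | "t \<in> {0..1/2}" | "t \<in> {1/2<..1}" "\<psi> (2 * t - 1) = 0"
    | "t \<in> {1/2<..1}" "\<psi> (2 * t - 1) \<noteq> 0"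
    by fastforce
  then show "path_concat (reparam p \<phi>) (reparam q \<psi>) t = reparam (path_concat p q) (concat_reparam \<phi> \<psi>) t"
  proof cases
    case 2
    then show ?thesis using reparametrization_range[OF \<phi>, of "2 * t"]
      by (auto simp: path_concat_def reparam_def concat_reparam_def)
  next
    case 3
    then show ?thesis using \<open>p 1 = q 0\<close>
      by (auto simp: path_concat_def reparam_def concat_reparam_def)
  next
    case 4
    then show ?thesis using reparametrization_range[OF \<psi>, of "2 * t - 1"]
      by (auto simp: path_concat_def reparam_def concat_reparam_def add_divide_distrib)
  qed (simp add: path_concat_def reparam_def del: atLeastAtMost_iff)
qed

section \<open>Traces\<close>

lemma equivclp_invariant:
  assumes "equivclp r x y" "I x" "\<And>y z. r y z \<Longrightarrow> I y \<longleftrightarrow> I z"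
  shows "I y"
  using assms(1,2) by (induction rule: equivclp_induct) (use assms(3) in blast)+

lemma equivclp_map_invariant:
  assumes "equivclp r x y" "I x"
    and "\<And>y z. r y z \<Longrightarrow> I y \<longleftrightarrow> I z"
    and "\<And>y z. r y z \<Longrightarrow> I y \<Longrightarrow> r' (F y) (F z)"
  shows "equivclp r' (F x) (F y)"
  using assms(1)
proof (induction rule: equivclp_induct)
  case (step y z)
  have "I y" "I z"
    using equivclp_invariant[where I = I, OF step.hyps(1) \<open>I x\<close> assms(3)] step.hyps(2) assms(3) by blast+
  with step.hyps(2) have "r' (F y) (F z) \<or> r' (F z) (F y)"
    using assms(4) by blast
  with step.IH show ?case by (rule equivclp_into_equivclp)
qed simp

context
  fixes X :: "'a topology" and dX :: "(real \<Rightarrow> 'a) set"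
  assumes dX: "dspace X dX"
begin

lemma dipath_extensional: "p \<in> dX \<Longrightarrow> p \<in> extensional {0..1}"
  using dX unfolding dspace_def is_path_in_def by blast

lemma dipath_in_topspace: "p \<in> dX \<Longrightarrow> t \<in> {0..1} \<Longrightarrow> p t \<in> topspace X"
  using dX continuous_map_image_subset_topspace
  unfolding dspace_def is_path_in_def unit_interval_def by fastforce

lemma dipath_path_concat: "p \<in> dX \<Longrightarrow> q \<in> dX \<Longrightarrow> p 1 = q 0 \<Longrightarrow> path_concat p q \<in> dX"
  using dX unfolding dspace_def by blast

lemma reparam_rel_refl: "p \<in> dX \<Longrightarrow> reparam_rel dX p p"
  unfolding reparam_rel_def
  using reparametrization_id reparam_id[OF dipath_extensional] by metis

lemma reparam_relD: "reparam_rel dX p q \<Longrightarrow> p \<in> dX \<and> q \<in> dX \<and> q 0 = p 0 \<and> q 1 = p 1"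
  using dX reparam_endpoints unfolding reparam_rel_def dspace_def by metis

lemma reparam_rel_path_concat:
  assumes "reparam_rel dX p p'" "reparam_rel dX q q'" "p 1 = q 0"
  shows "reparam_rel dX (path_concat p q) (path_concat p' q')"
proof -
  obtain \<phi> \<psi> where "reparametrization \<phi>" "p' = reparam p \<phi>" "reparametrization \<psi>" "q' = reparam q \<psi>"
    using assms(1,2) unfolding reparam_rel_def by blast
  then show ?thesis
    using assms reparam_relD dipath_path_concat path_concat_reparam reparametrization_concat_reparam
    unfolding reparam_rel_def by metis
qed

lemma equivclp_reparam_rel_dipaths:
  "equivclp (reparam_rel dX) p q \<Longrightarrow> p \<in> dX \<Longrightarrow> q \<in> dX \<and> q 0 = p 0 \<and> q 1 = p 1"
  by (erule equivclp_invariant[where I = "\<lambda>q. q \<in> dX \<and> q 0 = p 0 \<and> q 1 = p 1"])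
    (auto dest: reparam_relD)

lemma equivclp_reparam_rel_path_concat:
  assumes "equivclp (reparam_rel dX) p p'" "equivclp (reparam_rel dX) q q'"
    and "p \<in> dX" "q \<in> dX" "p 1 = q 0"
  shows "equivclp (reparam_rel dX) (path_concat p q) (path_concat p' q')"
proof -
  have p': "p' \<in> dX" "p' 1 = q 0"
    using equivclp_reparam_rel_dipaths[OF assms(1,3)] assms(5) by auto
  have "equivclp (reparam_rel dX) (path_concat p q) (path_concat p' q)"
    by (rule equivclp_map_invariant[OF assms(1), where I = "\<lambda>p. p \<in> dX \<and> p 1 = q 0"])
      (use assms in \<open>auto dest: reparam_relD intro: reparam_rel_path_concat reparam_rel_refl\<close>)
  also have "equivclp (reparam_rel dX) (path_concat p' q) (path_concat p' q')"
    by (rule equivclp_map_invariant[OF assms(2), where I = "\<lambda>q. q \<in> dX \<and> p' 1 = q 0"])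
      (use assms p' in \<open>auto dest: reparam_relD intro: reparam_rel_path_concat reparam_rel_refl\<close>)
  finally show ?thesis .
qed

end

lemma trace_of_self: "p \<in> dX \<Longrightarrow> p \<in> trace_of dX p"
  by (simp add: trace_of_def)

lemma trace_of_eq: "equivclp (reparam_rel dX) p q \<Longrightarrow> trace_of dX p = trace_of dX q"
  unfolding trace_of_def by (blast intro: equivclp_trans equivclp_sym)

lemma equivclp_some_trace_of:
  "p \<in> dX \<Longrightarrow> equivclp (reparam_rel dX) p (SOME q. q \<in> trace_of dX p)"
  using someI[of "\<lambda>q. q \<in> trace_of dX p", OF trace_of_self] unfolding trace_of_def by blast

context
  fixes X :: "'a topology" and dX :: "(real \<Rightarrow> 'a) set"
  assumes dX: "dspace X dX"
begin

lemma trace_endpoints: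
  assumes "p \<in> dX"
  shows "trace_src (trace_of dX p) = p 0" "trace_tgt (trace_of dX p) = p 1"
  using equivclp_reparam_rel_dipaths[OF dX equivclp_some_trace_of assms] assms
  unfolding trace_src_def trace_tgt_def by simp_all

lemma trace_endpoints_in_topspace:
  "a \<in> traces dX \<Longrightarrow> trace_src a \<in> topspace X \<and> trace_tgt a \<in> topspace X"
  using dipath_in_topspace[OF dX, of _ 0] dipath_in_topspace[OF dX, of _ 1]
  by (auto simp: traces_def trace_endpoints)

lemma trace_concat_trace_of:
  assumes "p \<in> dX" "q \<in> dX" "p 1 = q 0"
  shows "trace_concat dX (trace_of dX p) (trace_of dX q) = trace_of dX (path_concat p q)"
  using equivclp_reparam_rel_path_concat[OF dX equivclp_some_trace_of equivclp_some_trace_of assms]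
    assms
  unfolding trace_concat_def by (simp add: trace_of_eq)

lemma trace_concat_traces:
  assumes "s \<in> traces dX" "t \<in> traces dX" "trace_tgt s = trace_src t"
  shows "trace_concat dX s t \<in> traces dX \<and>
    trace_src (trace_concat dX s t) = trace_src s \<and> trace_tgt (trace_concat dX s t) = trace_tgt t"
proof -
  obtain p q where p: "p \<in> dX" "s = trace_of dX p" and q: "q \<in> dX" "t = trace_of dX q"
    using assms(1,2) unfolding traces_def by blast
  then have pq: "p 1 = q 0"
    using assms(3) trace_endpoints by simp
  then have "path_concat p q \<in> dX" "trace_concat dX s t = trace_of dX (path_concat p q)"
    using p q dipath_path_concat[OF dX] trace_concat_trace_of by simp_all
  then show ?thesis
    using p q trace_endpoints unfolding traces_def by auto
qed

end

section \<open>Directed maps acting on traces\<close>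

definition path_map :: "('a \<Rightarrow> 'b) \<Rightarrow> (real \<Rightarrow> 'a) \<Rightarrow> real \<Rightarrow> 'b" where
  "path_map f p = restrict (f \<circ> p) {0..1}"

definition trace_map :: "(real \<Rightarrow> 'b) set \<Rightarrow> ('a \<Rightarrow> 'b) \<Rightarrow> (real \<Rightarrow> 'a) set \<Rightarrow> (real \<Rightarrow> 'b) set" where
  "trace_map dY f t = trace_of dY (path_map f (SOME p. p \<in> t))"

lemma path_map_endpoints [simp]: "path_map f p 0 = f (p 0)" "path_map f p 1 = f (p 1)"
  by (simp_all add: path_map_def)

lemma path_map_path_concat: "path_map f (path_concat p q) = path_concat (path_map f p) (path_map f q)"
proof
  fix t :: real
  show "path_map f (path_concat p q) t = path_concat (path_map f p) (path_map f q) t"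
    by (cases "t \<in> {0..1}"; cases "t \<le> 1/2") (auto simp: path_map_def path_concat_def)
qed

lemma path_map_reparam:
  assumes "reparametrization \<phi>"
  shows "path_map f (reparam p \<phi>) = reparam (path_map f p) \<phi>"
proof
  fix t :: real
  show "path_map f (reparam p \<phi>) t = reparam (path_map f p) \<phi> t"
    using reparametrization_range[OF assms, of t] by (simp add: path_map_def reparam_def)
qed

locale dmorphism =
  fixes X :: "'a topology" and dX :: "(real \<Rightarrow> 'a) set"
    and Y :: "'b topology" and dY :: "(real \<Rightarrow> 'b) set" and f :: "'a \<Rightarrow> 'b"
  assumes dX: "dspace X dX" and dY: "dspace Y dY" and dmap: "dmap X dX Y dY f"
begin

lemma continuous: "continuous_map X Y f"
  using dmap unfolding dmap_def by blast

lemma path_map_dipath: "p \<in> dX \<Longrightarrow> path_map f p \<in> dY"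
  using dmap unfolding dmap_def path_map_def by blast

lemma equivclp_path_map:
  "equivclp (reparam_rel dX) p q \<Longrightarrow> equivclp (reparam_rel dY) (path_map f p) (path_map f q)"
  by (erule equivclp_map_invariant[where I = "\<lambda>_. True"])
    (auto simp: reparam_rel_def path_map_dipath path_map_reparam)

lemma trace_map_trace_of:
  assumes "p \<in> dX"
  shows "trace_map dY f (trace_of dX p) = trace_of dY (path_map f p)"
  using equivclp_path_map[OF equivclp_some_trace_of[OF assms]]
  unfolding trace_map_def by (metis trace_of_eq equivclp_sym)

lemma trace_map_traces: "t \<in> traces dX \<Longrightarrow> trace_map dY f t \<in> traces dY"
  unfolding traces_def using trace_map_trace_of path_map_dipath by auto

lemma trace_map_endpoints:
  assumes "t \<in> traces dX"
  shows "trace_src (trace_map dY f t) = f (trace_src t)" "trace_tgt (trace_map dY f t) = f (trace_tgt t)"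
  using assms trace_map_trace_of path_map_dipath trace_endpoints[OF dX] trace_endpoints[OF dY]
  unfolding traces_def by auto

lemma trace_map_trace_concat:
  assumes "s \<in> traces dX" "t \<in> traces dX" "trace_tgt s = trace_src t"
  shows "trace_map dY f (trace_concat dX s t) = trace_concat dY (trace_map dY f s) (trace_map dY f t)"
proof -
  obtain p q where p: "p \<in> dX" "s = trace_of dX p" and q: "q \<in> dX" "t = trace_of dX q"
    using assms(1,2) unfolding traces_def by blast
  then have pq: "p 1 = q 0"
    using assms(3) trace_endpoints[OF dX] by simp
  then show ?thesis
    using p q path_map_dipath dipath_path_concat[OF dX]
    by (simp add: trace_concat_trace_of[OF dX] trace_concat_trace_of[OF dY] trace_map_trace_of
        path_map_path_concat)
qed

lemma fact_hom_trace_map: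
  assumes "a \<in> traces dX" "(u, v) \<in> fact_hom dX a a'"
  shows "(trace_map dY f u, trace_map dY f v) \<in> fact_hom dY (trace_map dY f a) (trace_map dY f a')"
proof -
  have u: "u \<in> traces dX" "trace_tgt u = trace_src a" and v: "v \<in> traces dX" "trace_tgt a = trace_src v"
    and a': "a' = trace_concat dX (trace_concat dX u a) v"
    using assms(2) unfolding fact_hom_def by auto
  have ua: "trace_concat dX u a \<in> traces dX" "trace_tgt (trace_concat dX u a) = trace_tgt a"
    using trace_concat_traces[OF dX u(1) assms(1) u(2)] by auto
  show ?thesis
    unfolding fact_hom_def
    using a' u v ua assms(1)
    by (simp add: trace_map_traces trace_map_endpoints trace_map_trace_concat)
qed

end

locale dhomeomorphism = dmorphism +
  fixes g :: "'b \<Rightarrow> 'a"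
  assumes dmap_inverse: "dmap Y dY X dX g"
    and inverse_left: "\<forall>x\<in>topspace X. g (f x) = x" and inverse_right: "\<forall>y\<in>topspace Y. f (g y) = y"
begin

lemma dhomeomorphism_inverse: "dhomeomorphism Y dY X dX g f"
  using dX dY dmap dmap_inverse inverse_left inverse_right
  by (simp add: dhomeomorphism_def dhomeomorphism_axioms_def dmorphism_def)

sublocale inv: dmorphism Y dY X dX g
  by (rule dhomeomorphism.axioms(1)[OF dhomeomorphism_inverse])

lemma path_map_inverse:
  assumes "p \<in> dX"
  shows "path_map g (path_map f p) = p"
proof
  fix t :: real
  show "path_map g (path_map f p) t = p t"
    using dipath_in_topspace[OF dX assms, of t] dipath_extensional[OF dX assms] inverse_left
    by (cases "t \<in> {0..1}") (simp_all add: path_map_def extensional_def del: atLeastAtMost_iff)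
qed

lemma trace_map_inverse: "t \<in> traces dX \<Longrightarrow> trace_map dX g (trace_map dY f t) = t"
  using inv.trace_map_trace_of
  by (auto simp: traces_def trace_map_trace_of path_map_dipath path_map_inverse)

lemma bij_betw_trace_map: "bij_betw (trace_map dY f) (traces dX) (traces dY)"
  by (rule bij_betw_byWitness[where f' = "trace_map dX g"])
    (use trace_map_inverse dhomeomorphism.trace_map_inverse[OF dhomeomorphism_inverse]
      trace_map_traces inv.trace_map_traces in auto)

lemma fact_hom_trace_map_image:
  assumes a: "a \<in> traces dX" and a': "a' \<in> traces dX"
  shows "(\<lambda>(u, v). (trace_map dY f u, trace_map dY f v)) ` fact_hom dX a a'
    = fact_hom dY (trace_map dY f a) (trace_map dY f a')"
proof
  show "fact_hom dY (trace_map dY f a) (trace_map dY f a')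
    \<subseteq> (\<lambda>(u, v). (trace_map dY f u, trace_map dY f v)) ` fact_hom dX a a'"
  proof
    fix j assume j: "j \<in> fact_hom dY (trace_map dY f a) (trace_map dY f a')"
    obtain u' v' where uv': "j = (u', v')" "u' \<in> traces dY" "v' \<in> traces dY"
      using j unfolding fact_hom_def by auto
    have "(trace_map dX g u', trace_map dX g v') \<in> fact_hom dX a a'"
      using inv.fact_hom_trace_map[OF trace_map_traces[OF a], of u' v' "trace_map dY f a'"] j uv'(1)
      by (simp add: trace_map_inverse a a')
    then show "j \<in> (\<lambda>(u, v). (trace_map dY f u, trace_map dY f v)) ` fact_hom dX a a'"
      using uv' dhomeomorphism.trace_map_inverse[OF dhomeomorphism_inverse]
      by (auto intro!: image_eqI[where x = "(trace_map dX g u', trace_map dX g v')"])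
  qed
qed (use fact_hom_trace_map a in auto)

end

section \<open>Trace spaces\<close>

lemma istopology_quotient:
  "istopology (\<lambda>U. U \<subseteq> q ` topspace T \<and> openin T {x \<in> topspace T. q x \<in> U})"
proof -
  have preimage_Int: "{x \<in> topspace T. q x \<in> U \<inter> V} = {x \<in> topspace T. q x \<in> U} \<inter> {x \<in> topspace T. q x \<in> V}"
    and preimage_Union: "{x \<in> topspace T. q x \<in> \<Union>\<U>} = (\<Union>U\<in>\<U>. {x \<in> topspace T. q x \<in> U})" for U V \<U>
    by auto
  show ?thesis
    unfolding istopology_def preimage_Int preimage_Union by (auto intro!: openin_Union)
qed

lemma openin_quotient_topology:
  "openin (quotient_topology T q) U \<longleftrightarrow> U \<subseteq> q ` topspace T \<and> openin T {x \<in> topspace T. q x \<in> U}"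
  unfolding quotient_topology_def by (simp add: istopology_quotient)

lemma topspace_quotient_topology: "topspace (quotient_topology T q) = q ` topspace T"
proof -
  have "{x \<in> topspace T. q x \<in> q ` topspace T} = topspace T"
    by auto
  then have "openin (quotient_topology T q) (q ` topspace T)"
    unfolding openin_quotient_topology by simp
  moreover have "topspace (quotient_topology T q) \<subseteq> q ` topspace T"
    using openin_topspace[of "quotient_topology T q"] unfolding openin_quotient_topology by (rule conjunct1)
  ultimately show ?thesis
    using openin_subset by blast
qed

lemma quotient_map_quotient_topology: "quotient_map T (quotient_topology T q) q"
  unfolding quotient_map_def topspace_quotient_topology openin_quotient_topology by simp

lemma continuous_map_quotient_topology:
  assumes h: "continuous_map T T' h" and hk: "\<And>x. x \<in> topspace T \<Longrightarrow> k (q x) = q' (h x)"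
  shows "continuous_map (quotient_topology T q) (quotient_topology T' q') k"
proof (rule continuous_compose_quotient_map[OF quotient_map_quotient_topology])
  have "continuous_map T (quotient_topology T' q') (q' \<circ> h)"
    using h quotient_imp_continuous_map[OF quotient_map_quotient_topology] by (rule continuous_map_compose)
  then show "continuous_map T (quotient_topology T' q') (k \<circ> q)"
    by (rule continuous_map_eq) (simp add: hk)
qed

lemma topspace_compact_open_topology: "topspace (compact_open_topology X P) = P"
proof -
  have "P \<in> {{p \<in> P. p ` K \<subseteq> U} | K U. compactin unit_interval K \<and> openin X U}"
    by (rule CollectI, rule exI[of _ "{}"], rule exI[of _ "topspace X"]) auto
  then show ?thesis
    unfolding compact_open_topology_def topology_generated_by_topspace by blast
qed

lemma continuous_map_compact_open_topology:
  assumes f: "continuous_map X Y f" and P: "\<And>p t. p \<in> P \<Longrightarrow> t \<in> {0..1} \<Longrightarrow> p t \<in> topspace X"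
    and PP': "path_map f ` P \<subseteq> P'"
  shows "continuous_map (compact_open_topology X P) (compact_open_topology Y P') (path_map f)"
  unfolding compact_open_topology_def[of Y]
proof (rule continuous_on_generated_topo)
  fix U assume "U \<in> {{p \<in> P'. p ` K \<subseteq> V} | K V. compactin unit_interval K \<and> openin Y V}"
  then obtain K V where U: "U = {p \<in> P'. p ` K \<subseteq> V}" and K: "compactin unit_interval K"
    and V: "openin Y V" by blast
  have "K \<subseteq> {0..1}"
    using compactin_subset_topspace[OF K] unfolding unit_interval_def by simp
  then have "path_map f -` U \<inter> P = {p \<in> P. p ` K \<subseteq> {x \<in> topspace X. f x \<in> V}}"
    using P PP' unfolding U path_map_def by (auto simp: subset_iff)
  moreover have "openin X {x \<in> topspace X. f x \<in> V}"
    using f V by (rule openin_continuous_map_preimage)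
  ultimately show "openin (compact_open_topology X P) (path_map f -` U \<inter> topspace (compact_open_topology X P))"
    unfolding topspace_compact_open_topology unfolding compact_open_topology_def
    using K by (intro topology_generated_by_Basis) auto
next
  have "\<Union>{{p \<in> P'. p ` K \<subseteq> V} | K V. compactin unit_interval K \<and> openin Y V} = P'"
    using topspace_compact_open_topology[of Y P'] unfolding compact_open_topology_def by simp
  then show "path_map f ` topspace (compact_open_topology X P)
      \<subseteq> \<Union>{{p \<in> P'. p ` K \<subseteq> V} | K V. compactin unit_interval K \<and> openin Y V}"
    using PP' by (simp add: topspace_compact_open_topology)
qed

lemma topspace_trace_space:
  assumes "dspace X dX"
  shows "topspace (trace_space X dX x y) = {t \<in> traces dX. trace_src t = x \<and> trace_tgt t = y}"
  using trace_endpoints[OF assms]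
  by (auto simp: trace_space_def topspace_quotient_topology topspace_compact_open_topology
      dipaths_from_to_def traces_def)

lemma fact_hom_concat_trace_space:
  assumes dX: "dspace X dX" and a: "a \<in> traces dX" and uv: "(u, v) \<in> fact_hom dX a a'"
    and h: "h \<in> topspace (trace_space X dX (trace_src a) (trace_tgt a))"
  shows "trace_concat dX (trace_concat dX u h) v \<in> topspace (trace_space X dX (trace_src a') (trace_tgt a'))"
proof -
  have u: "u \<in> traces dX" "trace_tgt u = trace_src a" and v: "v \<in> traces dX" "trace_tgt a = trace_src v"
    and a': "a' = trace_concat dX (trace_concat dX u a) v"
    using uv unfolding fact_hom_def by auto
  have "h \<in> traces dX" "trace_src h = trace_src a" "trace_tgt h = trace_tgt a"
    using h unfolding topspace_trace_space[OF dX] by auto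
  then show ?thesis
    unfolding topspace_trace_space[OF dX] a'
    using trace_concat_traces[OF dX] u v a by auto
qed

context dmorphism
begin

lemma continuous_map_trace_space:
  "continuous_map (trace_space X dX x y) (trace_space Y dY (f x) (f y)) (trace_map dY f)"
  unfolding trace_space_def
proof (rule continuous_map_quotient_topology)
  show "continuous_map (compact_open_topology X (dipaths_from_to dX x y))
      (compact_open_topology Y (dipaths_from_to dY (f x) (f y))) (path_map f)"
    using continuous dipath_in_topspace[OF dX] path_map_dipath
    by (intro continuous_map_compact_open_topology) (auto simp: dipaths_from_to_def)
qed (simp add: topspace_compact_open_topology dipaths_from_to_def trace_map_trace_of)

end

context dhomeomorphism
begin

lemma homeomorphic_maps_trace_space:
  assumes "x \<in> topspace X" "y \<in> topspace X"
  shows "homeomorphic_maps (trace_space X dX x y) (trace_space Y dY (f x) (f y))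
    (trace_map dY f) (trace_map dX g)"
  unfolding homeomorphic_maps_def
  using continuous_map_trace_space
    inv.continuous_map_trace_space[of "f x" "f y"]
    trace_map_inverse dhomeomorphism.trace_map_inverse[OF dhomeomorphism_inverse]
  by (simp add: assms inverse_left topspace_trace_space[OF dX] topspace_trace_space[OF dY])

end

section \<open>Natural homology\<close>

text \<open>No continuity of \<open>k\<close> is assumed: conjugation by homeomorphisms preserves continuity,
  and \<open>hom_induced\<close> of a discontinuous map is trivial. This matters because the extension
  maps \<open>h \<mapsto> u \<star> h \<star> v\<close> of natural homology are not known to be continuous.\<close>

lemma hom_induced_conjugate_homeomorphic:
  assumes ST: "homeomorphic_maps S T f f'" and ST': "homeomorphic_maps S' T' g g'"
    and k: "k \<in> topspace S \<rightarrow> topspace S'"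
    and kl: "\<And>x. x \<in> topspace S \<Longrightarrow> g (k x) = l (f x)"
  shows "hom_induced p S' {} T' {} g (hom_induced p S {} S' {} k c)
    = hom_induced p T {} T' {} l (hom_induced p S {} T {} f c)"
proof -
  have f: "continuous_map S T f" and f': "continuous_map T S f'"
    and f'f: "\<And>x. x \<in> topspace S \<Longrightarrow> f' (f x) = x" and ff': "\<And>y. y \<in> topspace T \<Longrightarrow> f (f' y) = y"
    using ST by (auto simp: homeomorphic_maps_def)
  have g: "continuous_map S' T' g" and g': "continuous_map T' S' g'"
    and g'g: "\<And>x. x \<in> topspace S' \<Longrightarrow> g' (g x) = x"
    using ST' by (auto simp: homeomorphic_maps_def)
  have l_eq: "l y = (g \<circ> k \<circ> f') y" if "y \<in> topspace T" for y
    using kl[of "f' y"] ff'[OF that] continuous_map_image_subset_topspace[OF f'] that by auto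
  have k_eq: "k x = (g' \<circ> l \<circ> f) x" if "x \<in> topspace S" for x
    using g'g[OF funcset_mem[OF k that]] kl[OF that] by simp
  have "continuous_map S S' k \<longleftrightarrow> continuous_map T T' l"
  proof
    assume "continuous_map S S' k"
    then have "continuous_map T T' (g \<circ> k \<circ> f')"
      using f' g by (intro continuous_map_compose)
    then show "continuous_map T T' l"
      by (rule continuous_map_eq) (simp add: l_eq)
  next
    assume "continuous_map T T' l"
    then have "continuous_map S S' (g' \<circ> l \<circ> f)"
      using f g' by (intro continuous_map_compose)
    then show "continuous_map S S' k"
      by (rule continuous_map_eq) (simp add: k_eq)
  qed
  then consider "continuous_map S S' k" "continuous_map T T' l"
    | "\<not> continuous_map S S' k" "\<not> continuous_map T T' l"
    by blast
  then show ?thesis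
  proof cases
    case 1
    have "hom_induced p S' {} T' {} g (hom_induced p S {} S' {} k c) = hom_induced p S {} T' {} (g \<circ> k) c"
      using 1(1) g by (simp add: hom_induced_compose')
    also have "\<dots> = hom_induced p S {} T' {} (l \<circ> f) c"
      using kl by (metis comp_apply hom_induced_eq)
    also have "\<dots> = hom_induced p T {} T' {} l (hom_induced p S {} T {} f c)"
      using 1(2) f by (simp add: hom_induced_compose')
    finally show ?thesis .
  next
    case 2
    then show ?thesis
      using hom_one[OF hom_induced_hom] by (simp add: hom_induced_default)
  qed
qed

definition (in dmorphism) natural_homology_map ::
    "nat \<Rightarrow> (real \<Rightarrow> 'a) set \<Rightarrow> (real \<Rightarrow> 'a) set chain set \<Rightarrow> (real \<Rightarrow> 'b) set chain set" where
  "natural_homology_map n a =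
     hom_induced (int n - 1) (trace_space X dX (trace_src a) (trace_tgt a)) {}
       (trace_space Y dY (f (trace_src a)) (f (trace_tgt a))) {} (trace_map dY f)"

context dhomeomorphism
begin

lemma natural_homology_map_iso:
  assumes "a \<in> traces dX"
  shows "natural_homology_map n a \<in> iso (nat_hom_obj n X dX a) (nat_hom_obj n Y dY (trace_map dY f a))"
  using homeomorphic_maps_trace_space trace_endpoints_in_topspace[OF dX assms]
  unfolding natural_homology_map_def nat_hom_obj_def trace_map_endpoints[OF assms]
  by (meson homeomorphic_map_homology_iso homeomorphic_map_maps)

lemma natural_homology_map_natural:
  assumes a: "a \<in> traces dX" and a': "a' \<in> traces dX" and uv: "(u, v) \<in> fact_hom dX a a'"
  shows "natural_homology_map n a' (nat_hom_mor n X dX a a' (u, v) c)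
    = nat_hom_mor n Y dY (trace_map dY f a) (trace_map dY f a')
        (trace_map dY f u, trace_map dY f v) (natural_homology_map n a c)"
  unfolding natural_homology_map_def nat_hom_mor_def fst_conv snd_conv
    trace_map_endpoints[OF a] trace_map_endpoints[OF a']
proof (rule hom_induced_conjugate_homeomorphic)
  show "homeomorphic_maps (trace_space X dX (trace_src a) (trace_tgt a))
      (trace_space Y dY (f (trace_src a)) (f (trace_tgt a))) (trace_map dY f) (trace_map dX g)"
    "homeomorphic_maps (trace_space X dX (trace_src a') (trace_tgt a'))
      (trace_space Y dY (f (trace_src a')) (f (trace_tgt a'))) (trace_map dY f) (trace_map dX g)"
    using homeomorphic_maps_trace_space trace_endpoints_in_topspace[OF dX] a a' by auto
  show "(\<lambda>h. trace_concat dX (trace_concat dX u h) v) \<in> topspace (trace_space X dX (trace_src a) (trace_tgt a))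
      \<rightarrow> topspace (trace_space X dX (trace_src a') (trace_tgt a'))"
    using fact_hom_concat_trace_space[OF dX a uv] by blast
  fix h assume "h \<in> topspace (trace_space X dX (trace_src a) (trace_tgt a))"
  then have h: "h \<in> traces dX" "trace_src h = trace_src a" "trace_tgt h = trace_tgt a"
    unfolding topspace_trace_space[OF dX] by auto
  have u: "u \<in> traces dX" "trace_tgt u = trace_src a" and v: "v \<in> traces dX" "trace_tgt a = trace_src v"
    using uv unfolding fact_hom_def by auto
  show "trace_map dY f (trace_concat dX (trace_concat dX u h) v)
      = trace_concat dY (trace_concat dY (trace_map dY f u) (trace_map dY f h)) (trace_map dY f v)"
    using h u v trace_concat_traces[OF dX u(1) h(1)]
    by (simp add: trace_map_trace_concat)
qed

end

section \<open>Bisimulation\<close>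

lemma bisim_equivalent_if_isomorphic:
  assumes \<phi>: "bij_betw \<phi> A B"
    and \<psi>: "\<And>a a'. a \<in> A \<Longrightarrow> a' \<in> A \<Longrightarrow> \<psi> ` HomA a a' = HomB (\<phi> a) (\<phi> a')"
    and \<eta>: "\<And>a. a \<in> A \<Longrightarrow> \<eta> a \<in> iso (F a) (G (\<phi> a))"
    and natural: "\<And>a a' i c. a \<in> A \<Longrightarrow> a' \<in> A \<Longrightarrow> i \<in> HomA a a' \<Longrightarrow> c \<in> carrier (F a)
      \<Longrightarrow> \<eta> a' (Fm a a' i c) = Gm (\<phi> a) (\<phi> a') (\<psi> i) (\<eta> a c)"
  shows "bisim_equivalent A HomA F Fm B HomB G Gm"
proof -
  define R where "R = (\<lambda>a. (a, \<eta> a, \<phi> a)) ` A"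
  have B: "B = \<phi> ` A"
    using \<phi> by (simp add: bij_betw_def)
  have R_ball: "(\<forall>(a, e, b)\<in>R. P a e b) \<longleftrightarrow> (\<forall>a\<in>A. P a (\<eta> a) (\<phi> a))" for P
    by (simp add: R_def)
  have forward: "\<forall>a\<in>A. \<forall>a'\<in>A. \<forall>i\<in>HomA a a'. \<exists>e' b' j. (a', e', b') \<in> R \<and> j \<in> HomB (\<phi> a) b' \<and>
      (\<forall>c\<in>carrier (F a). e' (Fm a a' i c) = Gm (\<phi> a) b' j (\<eta> a c))"
    using \<psi> natural unfolding R_def by blast
  have backward: "\<forall>a\<in>A. \<forall>b'\<in>B. \<forall>j\<in>HomB (\<phi> a) b'. \<exists>e' a' i. (a', e', b') \<in> R \<and> i \<in> HomA a a' \<and>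
      (\<forall>c\<in>carrier (F a). e' (Fm a a' i c) = Gm (\<phi> a) b' j (\<eta> a c))"
  proof (intro ballI)
    fix a b' j assume a: "a \<in> A" and b': "b' \<in> B" and j: "j \<in> HomB (\<phi> a) b'"
    obtain a' where a': "a' \<in> A" "b' = \<phi> a'"
      using b' unfolding B by blast
    then obtain i where "i \<in> HomA a a'" "j = \<psi> i"
      using j \<psi>[OF a a'(1)] by blast
    then show "\<exists>e' a' i. (a', e', b') \<in> R \<and> i \<in> HomA a a' \<and>
        (\<forall>c\<in>carrier (F a). e' (Fm a a' i c) = Gm (\<phi> a) b' j (\<eta> a c))"
      using a a' natural unfolding R_def by blast
  qed
  have "bisimulation A HomA F Fm B HomB G Gm R"
    unfolding bisimulation_def R_ball
    using \<eta> forward backward by (auto simp: R_def B)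
  then show ?thesis
    unfolding bisim_equivalent_def by blast
qed

theorem lemma4p1:
  fixes X :: "'a topology" and dX :: "(real \<Rightarrow> 'a) set"
    and Y :: "'b topology" and dY :: "(real \<Rightarrow> 'b) set"
    and f :: "'a \<Rightarrow> 'b" and g :: "'b \<Rightarrow> 'a" and n :: nat
  assumes "dspace X dX" and "dspace Y dY"
    and "dmap X dX Y dY f" and "dmap Y dY X dX g"
    and "\<forall>x\<in>topspace X. g (f x) = x" and "\<forall>y\<in>topspace Y. f (g y) = y"
    and "n \<ge> 1"
  shows "bisim_equivalent
           (traces dX) (fact_hom dX) (nat_hom_obj n X dX) (nat_hom_mor n X dX)
           (traces dY) (fact_hom dY) (nat_hom_obj n Y dY) (nat_hom_mor n Y dY)"
proof -
  interpret dhomeomorphism X dX Y dY f g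
    using assms by (simp add: dhomeomorphism_def dhomeomorphism_axioms_def dmorphism_def)
  show ?thesis
  proof (rule bisim_equivalent_if_isomorphic[where \<phi> = "trace_map dY f"
        and \<psi> = "\<lambda>(u, v). (trace_map dY f u, trace_map dY f v)" and \<eta> = "natural_homology_map n"])
    fix a a' i c
    assume "a \<in> traces dX" "a' \<in> traces dX" "i \<in> fact_hom dX a a'"
    then show "natural_homology_map n a' (nat_hom_mor n X dX a a' i c) =
        nat_hom_mor n Y dY (trace_map dY f a) (trace_map dY f a')
          ((\<lambda>(u, v). (trace_map dY f u, trace_map dY f v)) i) (natural_homology_map n a c)"
      by (cases i) (simp add: natural_homology_map_natural)
  qed (simp_all add: bij_betw_trace_map fact_hom_trace_map_image natural_homology_map_iso)
qed

end
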